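(* Let $\mathcal H$ be a connected graded Hopf algebra over a field $\mathbb K$ of characteristic zero, $\alpha:\mathcal H_1\to\mathbb K$ a nonzero linear map and $q=q_\alpha$ the associated inverse-factorial character. Then for all $h,k\in\mathbb K$ and every homogeneous $x\in\mathcal H$, $$q(x)\,(h+k)^{|x|}=\sum_{(x)}q(x_1)\,q(x_2)\,h^{|x_1|}k^{|x_2|},$$ where $\Delta(x)=\sum_{(x)}x_1\otimes x_2$ is written with homogeneous $x_1,x_2$.
   Context: A connected graded Hopf algebra is $\mathcal H=\bigoplus_{n\ge0}\mathcal H_n$ with $\mathcal H_0=\mathbb K\mathbf 1$, product and coproduct $\Delta$ respecting the grading; $|x|$ is the degree of a homogeneous $x$. The reduced coproduct is $\Delta'(x)=\Delta(x)-x\otimes\mathbf 1-\mathbf 1\otimes x=\sum'_{(x)}x'\otimes x''$ (homogeneous components). The inverse-factorial character $q_\alpha$ is the linear form on $\mathcal H$ determined by $q_\alpha(\mathbf 1)=1$, $q_\alpha|_{\mathcal H_1}=\alpha$, and for homogeneous $x$ with $|x|\ge2$: $q_\alpha(x)=\frac{1}{2^{|x|}-2}\sum'_{(x)}q_\alpha(x')q_\alpha(x'')$. *)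

theory Defs
  imports Main "HOL-Library.Groups_Big_Fun"
begin

text \<open>
A connected graded Hopf algebra over a field 'k is encoded by a homogeneous basis,
indexed by the type 'b, with
  deg b      : degree of the basis element e_b,
  one        : the basis element equal to the unit 1,
  mult x y z : coefficient of e_z in e_x * e_y,
  cop x y z  : coefficient of e_y (x) e_z in Delta(e_x).
Elements of H are finitely supported coefficient functions 'b => 'k.
The counit of a connected graded bialgebra is the projection onto H_0 = K 1,
i.e. eps(e_b) = 1 if b = one and 0 otherwise.
\<close>

definition conn_graded_hopf ::
  "('b \<Rightarrow> nat) \<Rightarrow> 'b \<Rightarrow> ('b \<Rightarrow> 'b \<Rightarrow> 'b \<Rightarrow> 'k::field) \<Rightarrow> ('b \<Rightarrow> 'b \<Rightarrow> 'b \<Rightarrow> 'k) \<Rightarrow> bool" where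
  "conn_graded_hopf deg one mult cop \<longleftrightarrow>
     \<comment> \<open>connectedness: H_0 is spanned by the unit\<close>
     (\<forall>b. deg b = 0 \<longleftrightarrow> b = one) \<and>
     \<comment> \<open>products and coproducts are finite sums\<close>
     (\<forall>x y. finite {z. mult x y z \<noteq> 0}) \<and>
     (\<forall>x. finite {(y, z). cop x y z \<noteq> 0}) \<and>
     \<comment> \<open>grading\<close>
     (\<forall>x y z. mult x y z \<noteq> 0 \<longrightarrow> deg z = deg x + deg y) \<and>
     (\<forall>x y z. cop x y z \<noteq> 0 \<longrightarrow> deg y + deg z = deg x) \<and>
     \<comment> \<open>unit\<close>
     (\<forall>x z. mult one x z = (if z = x then 1 else 0)) \<and>
     (\<forall>x z. mult x one z = (if z = x then 1 else 0)) \<and>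
     \<comment> \<open>associativity\<close>
     (\<forall>x y z v. Sum_any (\<lambda>w. mult x y w * mult w z v) = Sum_any (\<lambda>w. mult y z w * mult x w v)) \<and>
     \<comment> \<open>coassociativity\<close>
     (\<forall>x y1 y2 y3. Sum_any (\<lambda>w. cop x w y3 * cop w y1 y2) = Sum_any (\<lambda>w. cop x y1 w * cop w y2 y3)) \<and>
     \<comment> \<open>counit laws\<close>
     (\<forall>x z. cop x one z = (if z = x then 1 else 0)) \<and>
     (\<forall>x y. cop x y one = (if y = x then 1 else 0)) \<and>
     \<comment> \<open>the counit is an algebra morphism\<close>
     (\<forall>x y. mult x y one = (if x = one \<and> y = one then 1 else 0)) \<and>
     \<comment> \<open>the coproduct is an algebra morphism\<close>
     (\<forall>a b. cop one a b = (if a = one \<and> b = one then 1 else 0)) \<and>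
     (\<forall>x y a b. Sum_any (\<lambda>w. mult x y w * cop w a b) =
        Sum_any (\<lambda>(a1, b1, a2, b2). cop x a1 b1 * cop y a2 b2 * mult a1 a2 a * mult b1 b2 b)) \<and>
     \<comment> \<open>existence of an antipode\<close>
     (\<exists>S :: 'b \<Rightarrow> 'b \<Rightarrow> 'k. (\<forall>x. finite {y. S x y \<noteq> 0}) \<and>
        (\<forall>x v. Sum_any (\<lambda>(y, z, w). cop x y z * S y w * mult w z v)
               = (if x = one \<and> v = one then 1 else 0)) \<and>
        (\<forall>x v. Sum_any (\<lambda>(y, z, w). cop x y z * S z w * mult y w v)
               = (if x = one \<and> v = one then 1 else 0)))"

definition red_cop :: "('b \<Rightarrow> 'b \<Rightarrow> 'b \<Rightarrow> 'k::field) \<Rightarrow> 'b \<Rightarrow> 'b \<Rightarrow> 'b \<Rightarrow> 'b \<Rightarrow> 'k" where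
  "red_cop cop one b y z =
     cop b y z - (if y = b \<and> z = one then 1 else 0) - (if y = one \<and> z = b then 1 else 0)"

definition is_inv_fact_char ::
  "('b \<Rightarrow> nat) \<Rightarrow> 'b \<Rightarrow> ('b \<Rightarrow> 'b \<Rightarrow> 'b \<Rightarrow> 'k::field) \<Rightarrow> ('b \<Rightarrow> 'k) \<Rightarrow> ('b \<Rightarrow> 'k) \<Rightarrow> bool" where
  "is_inv_fact_char deg one cop \<alpha> q \<longleftrightarrow>
     q one = 1 \<and>
     (\<forall>b. deg b = 1 \<longrightarrow> q b = \<alpha> b) \<and>
     (\<forall>b. 2 \<le> deg b \<longrightarrow>
        q b = (1 / (2 ^ deg b - 2)) * Sum_any (\<lambda>(y, z). red_cop cop one b y z * q y * q z))"

definition inv_fact_char ::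
  "('b \<Rightarrow> nat) \<Rightarrow> 'b \<Rightarrow> ('b \<Rightarrow> 'b \<Rightarrow> 'b \<Rightarrow> 'k::field) \<Rightarrow> ('b \<Rightarrow> 'k) \<Rightarrow> ('b \<Rightarrow> 'k)" where
  "inv_fact_char deg one cop \<alpha> = (THE q. is_inv_fact_char deg one cop \<alpha> q)"

definition lin_form :: "('b \<Rightarrow> 'k::field) \<Rightarrow> ('b \<Rightarrow> 'k) \<Rightarrow> 'k" where
  "lin_form q x = Sum_any (\<lambda>b. x b * q b)"

definition cop_elem :: "('b \<Rightarrow> 'b \<Rightarrow> 'b \<Rightarrow> 'k::field) \<Rightarrow> ('b \<Rightarrow> 'k) \<Rightarrow> 'b \<Rightarrow> 'b \<Rightarrow> 'k" where
  "cop_elem cop x y z = Sum_any (\<lambda>b. x b * cop b y z)"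

end

theory Submission
  imports Defs
begin

text \<open>
  The inverse-factorial character is the convolution exponential of the infinitesimal character
  Z that equals \<open>\<alpha>\<close> on H_1 and vanishes elsewhere. Since the convolution power Z^j is supported
  in degree j, this exponential takes the value Z^n(x) / n! on x of degree n, and the identity to
  be proved is exp(hZ) * exp(kZ) = exp((h+k)Z) evaluated in degree n; it follows from
  Z^(i+j) = Z^i * Z^j and the binomial theorem. For h = k = 1 it says that 2^n q(x) is the sum of
  q(x') q(x'') over the full coproduct, which is exactly the defining recursion, and the recursion
  determines the character uniquely by induction on the degree.
\<close>

lemma Sum_any_pair_eq_double_sum:
  fixes F :: "'a \<Rightarrow> 'a \<Rightarrow> 'k::comm_monoid_add"
  assumes "finite A" "\<And>y z. F y z \<noteq> 0 \<Longrightarrow> y \<in> A \<and> z \<in> A"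
  shows "Sum_any (\<lambda>(y, z). F y z) = (\<Sum>y\<in>A. \<Sum>z\<in>A. F y z)"
proof -
  have "Sum_any (\<lambda>(y, z). F y z) = (\<Sum>(y, z)\<in>A \<times> A. F y z)"
    by (rule Sum_any.expand_superset) (use assms in auto)
  then show ?thesis
    by (simp add: sum.cartesian_product)
qed

locale counital_coalgebra =
  fixes one :: 'b and cop :: "'b \<Rightarrow> 'b \<Rightarrow> 'b \<Rightarrow> 'k::field"
  assumes finite_cop: "\<And>x. finite {(y, z). cop x y z \<noteq> 0}"
    and coassoc: "\<And>x y1 y2 y3. Sum_any (\<lambda>w. cop x w y3 * cop w y1 y2) = Sum_any (\<lambda>w. cop x y1 w * cop w y2 y3)"
    and cop_one_left: "\<And>x z. cop x one z = (if z = x then 1 else 0)"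
    and cop_one_right: "\<And>x y. cop x y one = (if y = x then 1 else 0)"
begin

definition cop_supp :: "'b \<Rightarrow> 'b set" where
  "cop_supp b = fst ` {(y, z). cop b y z \<noteq> 0} \<union> snd ` {(y, z). cop b y z \<noteq> 0}"

lemma finite_cop_supp: "finite (cop_supp b)"
  using finite_cop[of b] by (simp add: cop_supp_def)

lemma cop_supp_memI: "cop b y z \<noteq> 0 \<Longrightarrow> y \<in> cop_supp b \<and> z \<in> cop_supp b"
  unfolding cop_supp_def by (auto intro: rev_image_eqI)

lemma one_in_cop_supp: "one \<in> cop_supp b" and self_in_cop_supp: "b \<in> cop_supp b"
  using cop_supp_memI[of b b one] by (auto simp: cop_one_right)

definition counit :: "'b \<Rightarrow> 'k" where
  "counit b = (if b = one then 1 else 0)"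

definition conv :: "('b \<Rightarrow> 'k) \<Rightarrow> ('b \<Rightarrow> 'k) \<Rightarrow> 'b \<Rightarrow> 'k" where
  "conv f g b = Sum_any (\<lambda>(y, z). cop b y z * f y * g z)"

lemma conv_eq_double_sum:
  assumes "finite A" "cop_supp b \<subseteq> A"
  shows "conv f g b = (\<Sum>y\<in>A. \<Sum>z\<in>A. cop b y z * f y * g z)"
  unfolding conv_def
  by (rule Sum_any_pair_eq_double_sum) (use assms cop_supp_memI in auto)

lemma conv_eq_sum_cop_supp: "conv f g b = (\<Sum>y\<in>cop_supp b. \<Sum>z\<in>cop_supp b. cop b y z * f y * g z)"
  by (rule conv_eq_double_sum[OF finite_cop_supp order_refl])

lemma conv_cong:
  assumes "\<And>y z. cop b y z \<noteq> 0 \<Longrightarrow> f y = f' y \<and> g z = g' z"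
  shows "conv f g b = conv f' g' b"
  unfolding conv_def
proof (rule Sum_any.cong, clarify)
  fix y z
  show "cop b y z * f y * g z = cop b y z * f' y * g' z"
    using assms[of y z] by (cases "cop b y z = 0") auto
qed

lemma conv_counit_left: "conv counit g b = g b"
proof -
  have "conv counit g b = (\<Sum>y\<in>cop_supp b. counit y * (\<Sum>z\<in>cop_supp b. cop b y z * g z))"
    by (simp add: conv_eq_sum_cop_supp sum_distrib_left mult_ac)
  also have "\<dots> = (\<Sum>z\<in>cop_supp b. cop b one z * g z)"
    by (simp add: counit_def finite_cop_supp one_in_cop_supp if_distrib[of "\<lambda>c. c * _"] cong: if_cong)
  also have "\<dots> = g b"
    by (simp add: cop_one_left finite_cop_supp self_in_cop_supp if_distrib[of "\<lambda>c. c * _"] cong: if_cong)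
  finally show ?thesis .
qed

lemma conv_counit_right: "conv f counit b = f b"
proof -
  have "conv f counit b = (\<Sum>y\<in>cop_supp b. \<Sum>z\<in>cop_supp b. counit z * (cop b y z * f y))"
    by (simp add: conv_eq_sum_cop_supp mult_ac)
  also have "\<dots> = (\<Sum>y\<in>cop_supp b. cop b y one * f y)"
    by (simp add: counit_def finite_cop_supp one_in_cop_supp if_distrib[of "\<lambda>c. c * _"] cong: if_cong)
  also have "\<dots> = f b"
    by (simp add: cop_one_right finite_cop_supp self_in_cop_supp if_distrib[of "\<lambda>c. c * _"] cong: if_cong)
  finally show ?thesis .
qed

lemma conv_assoc: "conv (conv f g) h b = conv f (conv g h) b"
proof -
  define A where "A = cop_supp b \<union> \<Union> (cop_supp ` cop_supp b)"
  have A: "finite A" "cop_supp b \<subseteq> A" "\<And>w. w \<in> cop_supp b \<Longrightarrow> cop_supp w \<subseteq> A"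
    unfolding A_def using finite_cop_supp by auto
  have inner: "cop b w z * conv f g w = cop b w z * (\<Sum>y1\<in>A. \<Sum>y2\<in>A. cop w y1 y2 * f y1 * g y2)"
    and inner': "cop b y1 w * conv g h w = cop b y1 w * (\<Sum>y2\<in>A. \<Sum>z\<in>A. cop w y2 z * g y2 * h z)"
    for w z y1
    using conv_eq_double_sum[OF A(1) A(3)] cop_supp_memI[of b] by (cases "w \<in> cop_supp b"; fastforce)+
  have coassoc_A: "(\<Sum>w\<in>A. cop b w z * cop w y1 y2) = (\<Sum>w\<in>A. cop b y1 w * cop w y2 z)" for y1 y2 z
    using coassoc[of b z y1 y2] A(2) cop_supp_memI[of b]
    by (subst (asm) (1 2) Sum_any.expand_superset[OF A(1)]) auto
  have "conv (conv f g) h b = (\<Sum>z\<in>A. \<Sum>w\<in>A. \<Sum>y1\<in>A. \<Sum>y2\<in>A. f y1 * g y2 * h z * (cop b w z * cop w y1 y2))"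
    by (subst sum.swap) (simp add: conv_eq_double_sum[OF A(1,2)] inner sum_distrib_left sum_distrib_right mult_ac)
  also have "\<dots> = (\<Sum>z\<in>A. \<Sum>y1\<in>A. \<Sum>y2\<in>A. f y1 * g y2 * h z * (\<Sum>w\<in>A. cop b w z * cop w y1 y2))"
    by (rule sum.cong[OF refl], subst sum.swap, rule sum.cong[OF refl], subst sum.swap)
      (simp add: sum_distrib_left)
  also have "\<dots> = (\<Sum>y1\<in>A. \<Sum>y2\<in>A. \<Sum>z\<in>A. f y1 * g y2 * h z * (\<Sum>w\<in>A. cop b y1 w * cop w y2 z))"
    by (subst sum.swap, rule sum.cong[OF refl], subst sum.swap) (simp add: coassoc_A)
  also have "\<dots> = (\<Sum>y1\<in>A. \<Sum>w\<in>A. \<Sum>y2\<in>A. \<Sum>z\<in>A. f y1 * g y2 * h z * (cop b y1 w * cop w y2 z))"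
    by (rule sum.cong[OF refl], subst sum.swap, rule sum.cong[OF refl], subst sum.swap)
      (simp add: sum_distrib_left)
  also have "\<dots> = conv f (conv g h) b"
    by (simp add: conv_eq_double_sum[OF A(1,2)] inner' sum_distrib_left sum_distrib_right mult_ac)
  finally show ?thesis .
qed

lemma conv_sum_sum:
  assumes "finite I" "finite J"
  shows "conv (\<lambda>y. \<Sum>i\<in>I. c i * f i y) (\<lambda>z. \<Sum>j\<in>J. d j * g j z) b
    = (\<Sum>i\<in>I. \<Sum>j\<in>J. c i * d j * conv (f i) (g j) b)"
proof -
  let ?T = "\<lambda>y z i j. c i * d j * (cop b y z * f i y * g j z)"
  have "conv (\<lambda>y. \<Sum>i\<in>I. c i * f i y) (\<lambda>z. \<Sum>j\<in>J. d j * g j z) b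
      = (\<Sum>y\<in>cop_supp b. \<Sum>z\<in>cop_supp b. \<Sum>i\<in>I. \<Sum>j\<in>J. ?T y z i j)"
    by (simp add: conv_eq_sum_cop_supp sum_distrib_left sum_distrib_right mult_ac)
  also have "\<dots> = (\<Sum>i\<in>I. \<Sum>j\<in>J. \<Sum>y\<in>cop_supp b. \<Sum>z\<in>cop_supp b. ?T y z i j)"
    by (simp only: sum.swap[of _ "cop_supp b" I] sum.swap[of _ "cop_supp b" J])
  also have "\<dots> = (\<Sum>i\<in>I. \<Sum>j\<in>J. c i * d j * conv (f i) (g j) b)"
    by (simp add: conv_eq_sum_cop_supp sum_distrib_left)
  finally show ?thesis .
qed

primrec conv_pow :: "('b \<Rightarrow> 'k) \<Rightarrow> nat \<Rightarrow> 'b \<Rightarrow> 'k" where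
  "conv_pow f 0 = counit"
| "conv_pow f (Suc j) = conv (conv_pow f j) f"

lemma conv_pow_add: "conv_pow f (i + j) b = conv (conv_pow f i) (conv_pow f j) b"
proof (induction j arbitrary: b)
  case 0
  then show ?case by (simp add: conv_counit_right)
next
  case (Suc j)
  then have "conv_pow f (i + j) = conv (conv_pow f i) (conv_pow f j)" by (intro ext)
  then show ?case by (simp add: conv_assoc)
qed

lemma Sum_any_red_cop:
  "Sum_any (\<lambda>(y, z). red_cop cop one b y z * F y z)
    = Sum_any (\<lambda>(y, z). cop b y z * F y z) - F b one - F one b"
proof -
  let ?A = "cop_supp b"
  have if_conj_zero: "\<And>P Q v. (if P \<and> Q then v else 0) = (if Q then if P then v else 0 else (0::'k))"
    by simp
  have "Sum_any (\<lambda>(y, z). red_cop cop one b y z * F y z) = (\<Sum>y\<in>?A. \<Sum>z\<in>?A. red_cop cop one b y z * F y z)"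
    by (rule Sum_any_pair_eq_double_sum)
      (auto simp: red_cop_def finite_cop_supp one_in_cop_supp self_in_cop_supp dest: cop_supp_memI split: if_splits)
  also have "\<dots> = (\<Sum>y\<in>?A. \<Sum>z\<in>?A. cop b y z * F y z) - F b one - F one b"
    using if_conj_zero by (simp add: red_cop_def left_diff_distrib sum_subtractf if_distrib[of "\<lambda>c. c * _"]
        finite_cop_supp one_in_cop_supp self_in_cop_supp cong: if_cong)
  also have "(\<Sum>y\<in>?A. \<Sum>z\<in>?A. cop b y z * F y z) = Sum_any (\<lambda>(y, z). cop b y z * F y z)"
    by (rule Sum_any_pair_eq_double_sum[symmetric]) (auto simp: finite_cop_supp dest: cop_supp_memI)
  finally show ?thesis .
qed

lemma lin_form_mult_eq_Sum_any_cop_elem: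
  assumes fin: "finite {b. x b \<noteq> 0}"
    and basis: "\<And>b. x b \<noteq> 0 \<Longrightarrow> \<phi> b * c = Sum_any (\<lambda>(y, z). cop b y z * G y z)"
  shows "lin_form \<phi> x * c = Sum_any (\<lambda>(y, z). cop_elem cop x y z * G y z)"
proof -
  define B where "B = {b. x b \<noteq> 0}"
  define A where "A = \<Union> (cop_supp ` B)"
  have "finite (A \<times> A)"
    using fin finite_cop_supp by (simp add: A_def B_def)
  have cop_elem_eq: "cop_elem cop x y z = (\<Sum>b\<in>B. x b * cop b y z)" for y z
    unfolding cop_elem_def by (rule Sum_any.expand_superset) (use fin B_def in auto)
  have cop_supp_sub: "{p. (\<lambda>(y, z). cop b y z * G y z) p \<noteq> 0} \<subseteq> A \<times> A" if "b \<in> B" for b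
    using that cop_supp_memI[of b] by (fastforce simp: A_def)
  have "lin_form \<phi> x * c = (\<Sum>b\<in>B. x b * (\<phi> b * c))"
    unfolding lin_form_def
    by (subst Sum_any.expand_superset[of B]) (auto simp: fin B_def sum_distrib_right mult.assoc)
  also have "\<dots> = (\<Sum>b\<in>B. x b * (\<Sum>(y, z)\<in>A \<times> A. cop b y z * G y z))"
  proof (rule sum.cong[OF refl])
    fix b assume "b \<in> B"
    then show "x b * (\<phi> b * c) = x b * (\<Sum>(y, z)\<in>A \<times> A. cop b y z * G y z)"
      using basis Sum_any.expand_superset[OF \<open>finite (A \<times> A)\<close> cop_supp_sub] by (simp add: B_def)
  qed
  also have "\<dots> = (\<Sum>(y, z)\<in>A \<times> A. cop_elem cop x y z * G y z)"
    by (simp add: cop_elem_eq sum_distrib_left sum_distrib_right mult.assoc sum.swap[of _ B] case_prod_unfold)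
  also have "\<dots> = Sum_any (\<lambda>(y, z). cop_elem cop x y z * G y z)"
  proof (rule Sum_any.expand_superset[symmetric, OF \<open>finite (A \<times> A)\<close>], safe)
    fix y z assume "cop_elem cop x y z * G y z \<noteq> 0"
    then obtain b where "b \<in> B" "cop b y z * G y z \<noteq> 0"
      by (auto simp: cop_elem_eq intro: sum.not_neutral_contains_not_neutral)
    then show "y \<in> A" "z \<in> A" using cop_supp_memI[of b y z] by (auto simp: A_def)
  qed
  finally show ?thesis .
qed

end

locale connected_graded_coalgebra =
  counital_coalgebra one cop for one :: 'b and cop :: "'b \<Rightarrow> 'b \<Rightarrow> 'b \<Rightarrow> 'k::field_char_0" +
  fixes deg :: "'b \<Rightarrow> nat"
  assumes deg_eq_0_iff: "\<And>b. deg b = 0 \<longleftrightarrow> b = one"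
    and deg_cop: "\<And>x y z. cop x y z \<noteq> 0 \<Longrightarrow> deg y + deg z = deg x"
begin

lemma deg_one [simp]: "deg one = 0"
  using deg_eq_0_iff by simp

lemma conv_pow_homogeneous:
  assumes "\<And>b. f b \<noteq> 0 \<Longrightarrow> deg b = d" and "conv_pow f j b \<noteq> 0"
  shows "deg b = j * d"
  using assms(2)
proof (induction j arbitrary: b)
  case 0
  then show ?case by (auto simp: counit_def deg_eq_0_iff split: if_splits)
next
  case (Suc j)
  from Suc.prems obtain p where "(\<lambda>(y, z). cop b y z * conv_pow f j y * f z) p \<noteq> 0"
    unfolding conv_pow.simps conv_def by (rule Sum_any.not_neutral_obtains_not_neutral)
  then obtain y z where "cop b y z \<noteq> 0" "conv_pow f j y \<noteq> 0" "f z \<noteq> 0"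
    by (cases p) auto
  then show ?case using Suc.IH assms(1) deg_cop by fastforce
qed

text \<open>For f supported in degree 1 the series of f^j / j! has a single nonzero term at each b.\<close>

definition conv_exp :: "('b \<Rightarrow> 'k) \<Rightarrow> 'b \<Rightarrow> 'k" where
  "conv_exp f b = conv_pow f (deg b) b / fact (deg b)"

context
  fixes f :: "'b \<Rightarrow> 'k"
  assumes f_deg1: "\<And>b. f b \<noteq> 0 \<Longrightarrow> deg b = 1"
begin

lemma conv_pow_nonzero_deg: "conv_pow f j b \<noteq> 0 \<Longrightarrow> deg b = j"
  using conv_pow_homogeneous[OF f_deg1] by fastforce

lemma conv_exp_mult_power:
  assumes "deg y \<le> N"
  shows "conv_exp f y * c ^ deg y = (\<Sum>i\<le>N. c ^ i / fact i * conv_pow f i y)"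
proof -
  have "(\<Sum>i\<le>N. c ^ i / fact i * conv_pow f i y)
      = (\<Sum>i\<le>N. if i = deg y then c ^ i / fact i * conv_pow f i y else 0)"
    by (intro sum.cong refl) (use conv_pow_nonzero_deg in fastforce)
  then show ?thesis
    using assms by (simp add: conv_exp_def)
qed

lemma conv_exp_binomial:
  assumes "deg b = n"
  shows "Sum_any (\<lambda>(y, z). cop b y z * (conv_exp f y * conv_exp f z * h ^ deg y * k ^ deg z))
    = conv_exp f b * (h + k) ^ n"
proof -
  let ?P = "conv_pow f"
  have "Sum_any (\<lambda>(y, z). cop b y z * (conv_exp f y * conv_exp f z * h ^ deg y * k ^ deg z))
      = conv (\<lambda>y. conv_exp f y * h ^ deg y) (\<lambda>z. conv_exp f z * k ^ deg z) b"
    by (simp add: conv_def mult_ac)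
  also have "\<dots> = conv (\<lambda>y. \<Sum>i\<le>n. h ^ i / fact i * ?P i y) (\<lambda>z. \<Sum>j\<le>n. k ^ j / fact j * ?P j z) b"
  proof (rule conv_cong)
    fix y z assume "cop b y z \<noteq> 0"
    then have "deg y \<le> n" "deg z \<le> n"
      using deg_cop assms by force+
    then show "conv_exp f y * h ^ deg y = (\<Sum>i\<le>n. h ^ i / fact i * ?P i y)
      \<and> conv_exp f z * k ^ deg z = (\<Sum>j\<le>n. k ^ j / fact j * ?P j z)"
      by (simp add: conv_exp_mult_power)
  qed
  also have "\<dots> = (\<Sum>i\<le>n. \<Sum>j\<le>n. h ^ i / fact i * (k ^ j / fact j) * ?P (i + j) b)"
    by (subst conv_sum_sum) (simp_all add: conv_pow_add)
  also have "\<dots> = (\<Sum>i\<le>n. h ^ i / fact i * (k ^ (n - i) / fact (n - i)) * ?P n b)"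
  proof (intro sum.cong refl)
    fix i assume i: "i \<in> {..n}"
    have "(\<Sum>j\<le>n. h ^ i / fact i * (k ^ j / fact j) * ?P (i + j) b)
        = (\<Sum>j\<le>n. if j = n - i then h ^ i / fact i * (k ^ j / fact j) * ?P n b else 0)"
      by (intro sum.cong refl) (use conv_pow_nonzero_deg[of _ b] assms i in force)
    then show "(\<Sum>j\<le>n. h ^ i / fact i * (k ^ j / fact j) * ?P (i + j) b)
        = h ^ i / fact i * (k ^ (n - i) / fact (n - i)) * ?P n b"
      by simp
  qed
  also have "\<dots> = (\<Sum>i\<le>n. ?P n b / fact n * (of_nat (n choose i) * h ^ i * k ^ (n - i)))"
    by (intro sum.cong refl) (simp add: binomial_fact field_simps)
  also have "\<dots> = conv_exp f b * (h + k) ^ n"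
    by (simp add: conv_exp_def assms binomial_ring sum_distrib_left)
  finally show ?thesis .
qed

end

definition deg1_extension :: "('b \<Rightarrow> 'k) \<Rightarrow> 'b \<Rightarrow> 'k" where
  "deg1_extension \<alpha> b = (if deg b = 1 then \<alpha> b else 0)"

lemma deg1_extension_nonzero: "deg1_extension \<alpha> b \<noteq> 0 \<Longrightarrow> deg b = 1"
  by (simp add: deg1_extension_def split: if_splits)

lemma conv_exp_is_inv_fact_char: "is_inv_fact_char deg one cop \<alpha> (conv_exp (deg1_extension \<alpha>))"
  unfolding is_inv_fact_char_def
proof (intro conjI allI impI)
  let ?q = "conv_exp (deg1_extension \<alpha>)"
  show q_one: "?q one = 1"
    by (simp add: conv_exp_def counit_def)
  show "?q b = \<alpha> b" if "deg b = 1" for b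
    using that by (simp add: conv_exp_def conv_counit_left deg1_extension_def)
  fix b assume deg_b: "2 \<le> deg b"
  have "Sum_any (\<lambda>(y, z). cop b y z * (?q y * ?q z * 1 ^ deg y * 1 ^ deg z)) = ?q b * (1 + 1) ^ deg b"
    by (rule conv_exp_binomial[OF deg1_extension_nonzero refl])
  then have "Sum_any (\<lambda>(y, z). red_cop cop one b y z * (?q y * ?q z)) = (2 ^ deg b - 2) * ?q b"
    by (simp add: Sum_any_red_cop q_one algebra_simps)
  moreover have "(2::'k) ^ deg b \<noteq> 2"
  proof -
    have "(2::nat) ^ 2 \<le> 2 ^ deg b"
      using deg_b by (rule power_increasing) simp
    then have "of_nat (2 ^ deg b) \<noteq> (of_nat 2 :: 'k)"
      unfolding of_nat_eq_iff by auto
    then show ?thesis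
      by simp
  qed
  ultimately show "?q b = 1 / (2 ^ deg b - 2) * Sum_any (\<lambda>(y, z). red_cop cop one b y z * ?q y * ?q z)"
    by (simp add: mult.assoc)
qed

lemma red_cop_nonzero_deg_less:
  assumes "red_cop cop one b y z \<noteq> 0" "b \<noteq> one"
  shows "deg y < deg b \<and> deg z < deg b"
proof -
  have "cop b y z \<noteq> 0" "y \<noteq> one" "z \<noteq> one"
    using assms by (auto simp: red_cop_def cop_one_left cop_one_right split: if_splits)
  then show ?thesis
    using deg_cop deg_eq_0_iff by fastforce
qed

lemma is_inv_fact_char_unique:
  assumes "is_inv_fact_char deg one cop \<alpha> q" "is_inv_fact_char deg one cop \<alpha> q'"
  shows "q = q'"
proof
  fix b
  show "q b = q' b"
  proof (induction "deg b" arbitrary: b rule: less_induct)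
    case less
    consider "deg b = 0" | "deg b = 1" | "2 \<le> deg b" by linarith
    then show ?case
    proof cases
      case 3
      then have "b \<noteq> one" by auto
      then have "(\<lambda>(y, z). red_cop cop one b y z * q y * q z) = (\<lambda>(y, z). red_cop cop one b y z * q' y * q' z)"
        using less red_cop_nonzero_deg_less[of b] by (fastforce simp: fun_eq_iff)
      then show ?thesis
        using assms 3 by (simp add: is_inv_fact_char_def)
    qed (use assms deg_eq_0_iff in \<open>auto simp: is_inv_fact_char_def\<close>)
  qed
qed

lemma inv_fact_char_eq_conv_exp: "inv_fact_char deg one cop \<alpha> = conv_exp (deg1_extension \<alpha>)"
  unfolding inv_fact_char_def
  by (rule the_equality) (use conv_exp_is_inv_fact_char is_inv_fact_char_unique in blast)+

end

lemma conn_graded_hopf_imp_connected_graded_coalgebra: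
  assumes "conn_graded_hopf deg one mult cop"
  shows "connected_graded_coalgebra one cop deg"
  by unfold_locales (use assms in \<open>simp_all add: conn_graded_hopf_def\<close>)

theorem mainTheorem2:
  fixes deg :: "'b \<Rightarrow> nat" and one :: 'b
    and mult cop :: "'b \<Rightarrow> 'b \<Rightarrow> 'b \<Rightarrow> 'k::field_char_0"
    and \<alpha> :: "'b \<Rightarrow> 'k" and h k :: 'k and x :: "'b \<Rightarrow> 'k" and n :: nat
  assumes "conn_graded_hopf deg one mult cop"
    and "\<exists>b. deg b = 1 \<and> \<alpha> b \<noteq> 0"
    and "finite {b. x b \<noteq> 0}"
    and "\<forall>b. x b \<noteq> 0 \<longrightarrow> deg b = n"
  shows "lin_form (inv_fact_char deg one cop \<alpha>) x * (h + k) ^ n =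
     Sum_any (\<lambda>(y, z). cop_elem cop x y z
        * inv_fact_char deg one cop \<alpha> y * inv_fact_char deg one cop \<alpha> z
        * h ^ deg y * k ^ deg z)"
proof -
  interpret connected_graded_coalgebra one cop deg
    using assms(1) by (rule conn_graded_hopf_imp_connected_graded_coalgebra)
  let ?q = "conv_exp (deg1_extension \<alpha>)"
  have "lin_form ?q x * (h + k) ^ n
      = Sum_any (\<lambda>(y, z). cop_elem cop x y z * (?q y * ?q z * h ^ deg y * k ^ deg z))"
    using assms(4)
    by (intro lin_form_mult_eq_Sum_any_cop_elem[OF assms(3)])
      (simp add: conv_exp_binomial[OF deg1_extension_nonzero])
  then show ?thesis
    by (simp add: inv_fact_char_eq_conv_exp mult.assoc)
qed

end
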